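(* Assume conditions (C1)–(C5). Let $\zeta\in\Theta$ be $q_0$-periodic for some $q_0\in\mathbb N$, i.e. $\zeta_{k+q_0}=\zeta_k$ for all $k\in\mathbb Z$, and let $p_0=\mathrm{lcm}\{q_0,p\}/p$. Then $\varphi_\zeta(t+p_0\omega)=\varphi_\zeta(t)$ for all $t\in\mathbb T_0$.
   Context: Fix integers $m,n\ge1$ and $r\ge0$. Cells are indexed by pairs $(i,j)$, $1\le i\le m$, $1\le j\le n$. The $r$-neighbourhood of $(i,j)$ is $N_r(i,j)=\{(h,l):1\le h\le m,\ 1\le l\le n,\ \max(|h-i|,|l-j|)\le r\}$. Fix constants $a_{ij}>0$, $C^{hl}_{ij}\ge0$, and a continuous function $f:\mathbb R\to\mathbb R$. Vectors of $\mathbb R^{mn}$ are written $v=\{v_{ij}\}$, with norm $\|v\|=\max_{(i,j)}|v_{ij}|$. Time scale: $\{\theta_k\}_{k\in\mathbb Z}$ is strictly increasing, $\theta_{-1}<0<\theta_0$, and there exist $\omega>0$ and $p\in\mathbb N$ with $\theta_{k+2p}=\theta_k+\omega$ for all $k$. Set $\mathbb T_0=\bigcup_{k\in\mathbb Z}[\theta_{2k-1},\theta_{2k}]$, $\delta_k=\theta_{2k+1}-\theta_{2k}$, $\eta_k=\theta_{2k}-\theta_{2k-1}$ (both $p$-periodic in $k$), $\delta=\max_{1\le k\le p}\delta_k$. On $\mathbb T_0'=\mathbb T_0\setminus\{\theta_{2k-1}:k\in\mathbb Z\}$ define $\psi(t)=t-\sum_{0<\theta_{2k}<t}\delta_k$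 for $t\ge0$ and $\psi(t)=t+\sum_{t\le\theta_{2k}<0}\delta_k$ for $t<0$; put $s_k=\psi(\theta_{2k})$, and write $\psi(\omega):=\omega-\sum_{k=1}^p\delta_k=\sum_{k=1}^p\eta_k$. Inputs: $\Lambda\subset\mathbb R^{mn}$ is compact and $F:\Lambda\to\Lambda$ is continuous. $\Theta$ is the set of all sequences $\zeta=\{\zeta_k\}_{k\in\mathbb Z}$, $\zeta_k=\{\zeta^{ij}_k\}\in\Lambda$, with $\zeta_{k+1}=F(\zeta_k)$ for all $k\in\mathbb Z$. For $\zeta\in\Theta$, $L_{ij}(t,\zeta)=\zeta^{ij}_k$ for $t\in[\theta_{2k-1},\theta_{2k}]$. Network $(N_\zeta)$ on $\mathbb T_0$: a solution on $\mathbb T_0$ is a function continuous and (one-sidedly at endpoints) differentiable on each $[\theta_{2k-1},\theta_{2k}]$ satisfying there $x_{ij}'=-a_{ij}x_{ij}-\sum_{(h,l)\in N_r(i,j)}C^{hl}_{ij}f(x_{hl})x_{ij}+\zeta^{ij}_k$, together with $x_{ij}(\theta_{2k+1})=(1-\delta_ka_{ij})x_{ij}(\theta_{2k})-\delta_k\sum_{(h,l)\in N_r(i,j)}C^{hl}_{ij}f(x_{hl}(\theta_{2k}))x_{ij}(\theta_{2k})+\delta_k\zeta^{ij}_k$ (this is the $\Delta$-equation $x^\Delta_{ij}=-a_{ij}x_{ij}-\sum C^{hl}_{ij}f(x_{hl})x_{ij}+L_{ij}(t,\zeta)$ on $\mathbb T_0$). Let $u_{ij}(s,\tau)=e^{-a_{ij}(s-\tau)}\prod_{\nu=l}^{k}(1-\delta_\nu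 a_{ij})$ if $s_{l-1}<\tau\le s_l$, $s_k<s\le s_{k+1}$, $k\ge l$, and $u_{ij}(s,\tau)=e^{-a_{ij}(s-\tau)}$ if $s_k<\tau\le s\le s_{k+1}$. Let $\lambda_{ij}=a_{ij}-\frac1{\psi(\omega)}\sum_{\nu=0}^{p-1}\ln|1-\delta_\nu a_{ij}|$, $\lambda=\min_{(i,j)}\lambda_{ij}$. Conditions: (C1) $\delta_ka_{ij}\ne1$ for all $i,j,k$; (C2) $\lambda>0$; (C3) $\sup_{s\in\mathbb R}|f(s)|\le M_f$ for some $M_f>0$; (C4) $|f(s_1)-f(s_2)|\le L_f|s_1-s_2|$ for all $s_1,s_2$, for some $L_f>0$. Under (C1),(C2) fix positive numbers $K_{ij}$ with $|u_{ij}(s,\tau)|\le K_{ij}e^{-\lambda_{ij}(s-\tau)}$ for $s\ge\tau$. Define $\bar c=\max_{(i,j)}\big(\frac{K_{ij}}{\lambda_{ij}}+\frac{p\delta K_{ij}}{1-e^{-\lambda_{ij}\psi(\omega)}}\big)\sum_{(h,l)\in N_r(i,j)}C^{hl}_{ij}$, $M_F=\max_{\eta\in\Lambda}\|F(\eta)\|$, $H_0=\frac{M_F}{1-M_f\bar c}\max_{(i,j)}\big(\frac{K_{ij}}{\lambda_{ij}}+\frac{p\delta K_{ij}}{1-e^{-\lambda_{ij}\psi(\omega)}}\big)$. (C5) $(M_f+H_0L_f)\bar c<1$. $\varphi_\zeta$ denotes the unique solution of $(N_\zeta)$ defined on all of $\mathbb T_0$ with $\sup_{t\in\mathbb T_0}\|\varphi_\zeta(t)\|\le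 H_0$ (it exists and is unique under (C1)–(C5)). *)

theory Defs
  imports "HOL-Analysis.Analysis"
begin

text \<open>Cells are pairs (i,j) with 1 \<le> i \<le> m, 1 \<le> j \<le> n. Vectors of R^{mn} are
  functions on nat \<times> nat; only their values on the cells matter.\<close>

type_synonym vec = "nat \<times> nat \<Rightarrow> real"

definition cells :: "nat \<Rightarrow> nat \<Rightarrow> (nat \<times> nat) set" where
  "cells m n = {1..m} \<times> {1..n}"

definition nbhd :: "nat \<Rightarrow> nat \<Rightarrow> nat \<Rightarrow> nat \<times> nat \<Rightarrow> (nat \<times> nat) set" where
  "nbhd m n r c = {hl \<in> cells m n.
     max \<bar>int (fst hl) - int (fst c)\<bar> \<bar>int (snd hl) - int (snd c)\<bar> \<le> int r}"

definition vnorm :: "nat \<Rightarrow> nat \<Rightarrow> vec \<Rightarrow> real" where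
  "vnorm m n v = Max ((\<lambda>c. \<bar>v c\<bar>) ` cells m n)"

definition T0 :: "(int \<Rightarrow> real) \<Rightarrow> real set" where
  "T0 \<theta> = (\<Union>k::int. {\<theta> (2*k - 1) .. \<theta> (2*k)})"

definition dlt :: "(int \<Rightarrow> real) \<Rightarrow> int \<Rightarrow> real" where
  "dlt \<theta> k = \<theta> (2*k + 1) - \<theta> (2*k)"

definition eta :: "(int \<Rightarrow> real) \<Rightarrow> int \<Rightarrow> real" where
  "eta \<theta> k = \<theta> (2*k) - \<theta> (2*k - 1)"

definition psi :: "(int \<Rightarrow> real) \<Rightarrow> real \<Rightarrow> real" where
  "psi \<theta> t = (if t \<ge> 0 then t - (\<Sum>k\<in>{k. 0 < \<theta> (2*k) \<and> \<theta> (2*k) < t}. dlt \<theta> k)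
               else t + (\<Sum>k\<in>{k. t \<le> \<theta> (2*k) \<and> \<theta> (2*k) < 0}. dlt \<theta> k))"

definition sk :: "(int \<Rightarrow> real) \<Rightarrow> int \<Rightarrow> real" where
  "sk \<theta> k = psi \<theta> (\<theta> (2*k))"

definition psi_om :: "(int \<Rightarrow> real) \<Rightarrow> nat \<Rightarrow> real" where
  "psi_om \<theta> p = (\<Sum>k\<in>{1..int p}. eta \<theta> k)"

text \<open>u_ij(s,tau) for s \<ge> tau, with a = a_ij: if s_{l-1} < tau \<le> s_l and s_k < s \<le> s_{k+1}
  then u = exp(-a(s-tau)) * prod_{nu=l..k} (1 - delta_nu a), the product being empty
  (=1) when k < l, i.e. k = l-1.\<close>
definition uu :: "(int \<Rightarrow> real) \<Rightarrow> real \<Rightarrow> real \<Rightarrow> real \<Rightarrow> real" where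
  "uu \<theta> a s \<tau> =
     (let l = (THE l. sk \<theta> (l - 1) < \<tau> \<and> \<tau> \<le> sk \<theta> l);
          k = (THE k. sk \<theta> k < s \<and> s \<le> sk \<theta> (k + 1))
      in exp (- a * (s - \<tau>)) * (\<Prod>\<nu>\<in>{l..k}. 1 - dlt \<theta> \<nu> * a))"

definition lam :: "(int \<Rightarrow> real) \<Rightarrow> nat \<Rightarrow> real \<Rightarrow> real" where
  "lam \<theta> p a = a - (1 / psi_om \<theta> p) * (\<Sum>\<nu><p. ln \<bar>1 - dlt \<theta> (int \<nu>) * a\<bar>)"

definition dmax :: "(int \<Rightarrow> real) \<Rightarrow> nat \<Rightarrow> real" where
  "dmax \<theta> p = Max (dlt \<theta> ` {1..int p})"

definition coefK :: "(int \<Rightarrow> real) \<Rightarrow> nat \<Rightarrow> real \<Rightarrow> real \<Rightarrow> real" where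
  "coefK \<theta> p a K = K / lam \<theta> p a
     + real p * dmax \<theta> p * K / (1 - exp (- lam \<theta> p a * psi_om \<theta> p))"

definition cbar :: "nat \<Rightarrow> nat \<Rightarrow> nat \<Rightarrow> (int \<Rightarrow> real) \<Rightarrow> nat \<Rightarrow> (nat \<times> nat \<Rightarrow> real)
    \<Rightarrow> (nat \<times> nat \<Rightarrow> nat \<times> nat \<Rightarrow> real) \<Rightarrow> (nat \<times> nat \<Rightarrow> real) \<Rightarrow> real" where
  "cbar m n r \<theta> p a C K =
     Max ((\<lambda>c. coefK \<theta> p (a c) (K c) * (\<Sum>hl\<in>nbhd m n r c. C c hl)) ` cells m n)"

definition MF :: "nat \<Rightarrow> nat \<Rightarrow> vec set \<Rightarrow> (vec \<Rightarrow> vec) \<Rightarrow> real" where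
  "MF m n \<Lambda> F = Sup ((\<lambda>\<eta>. vnorm m n (F \<eta>)) ` \<Lambda>)"

definition H0 :: "nat \<Rightarrow> nat \<Rightarrow> nat \<Rightarrow> (int \<Rightarrow> real) \<Rightarrow> nat \<Rightarrow> (nat \<times> nat \<Rightarrow> real)
    \<Rightarrow> (nat \<times> nat \<Rightarrow> nat \<times> nat \<Rightarrow> real) \<Rightarrow> (nat \<times> nat \<Rightarrow> real) \<Rightarrow> real
    \<Rightarrow> vec set \<Rightarrow> (vec \<Rightarrow> vec) \<Rightarrow> real" where
  "H0 m n r \<theta> p a C K Mf \<Lambda> F =
     MF m n \<Lambda> F / (1 - Mf * cbar m n r \<theta> p a C K)
       * Max ((\<lambda>c. coefK \<theta> p (a c) (K c)) ` cells m n)"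

definition in_Theta :: "vec set \<Rightarrow> (vec \<Rightarrow> vec) \<Rightarrow> (int \<Rightarrow> vec) \<Rightarrow> bool" where
  "in_Theta \<Lambda> F \<zeta> = (\<forall>k. \<zeta> k \<in> \<Lambda> \<and> \<zeta> (k + 1) = F (\<zeta> k))"

definition is_solution :: "nat \<Rightarrow> nat \<Rightarrow> nat \<Rightarrow> (nat \<times> nat \<Rightarrow> real)
    \<Rightarrow> (nat \<times> nat \<Rightarrow> nat \<times> nat \<Rightarrow> real) \<Rightarrow> (real \<Rightarrow> real) \<Rightarrow> (int \<Rightarrow> real)
    \<Rightarrow> (int \<Rightarrow> vec) \<Rightarrow> (real \<Rightarrow> vec) \<Rightarrow> bool" where
  "is_solution m n r a C f \<theta> \<zeta> x =
    (\<forall>k::int. \<forall>c\<in>cells m n.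
       continuous_on {\<theta> (2*k - 1) .. \<theta> (2*k)} (\<lambda>t. x t c)
     \<and> (\<forall>t\<in>{\<theta> (2*k - 1) .. \<theta> (2*k)}.
          ((\<lambda>t. x t c) has_real_derivative
             (- a c * x t c - (\<Sum>hl\<in>nbhd m n r c. C c hl * f (x t hl) * x t c) + \<zeta> k c))
          (at t within {\<theta> (2*k - 1) .. \<theta> (2*k)}))
     \<and> x (\<theta> (2*k + 1)) c =
          (1 - dlt \<theta> k * a c) * x (\<theta> (2*k)) c
          - dlt \<theta> k * (\<Sum>hl\<in>nbhd m n r c. C c hl * f (x (\<theta> (2*k)) hl) * x (\<theta> (2*k)) c)
          + dlt \<theta> k * \<zeta> k c)"

end

theory Submission
  imports Defs
begin

text \<open>The shifted function \<open>x (t + p\<^sub>0 \<omega>)\<close> solves the same network: the time scale is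
  invariant under the index shift \<open>2 p p\<^sub>0\<close> (a time shift by \<open>p\<^sub>0 \<omega>\<close>), and \<open>\<zeta>\<close> under the
  index shift \<open>p p\<^sub>0 = lcm q\<^sub>0 p\<close>. It obeys the same bound \<open>H\<^sub>0\<close>, so periodicity follows from
  uniqueness of the bounded solution.

  For uniqueness, the difference \<open>d\<close> of two bounded solutions satisfies in every cell a scalar
  linear impulsive equation \<open>d\<^sup>\<Delta> = -a d + g\<close> with \<open>|g| \<le> (\<Sum>C) (M\<^sub>f + H\<^sub>0 L\<^sub>f) sup |d|\<close>.
  Variation of constants in the reduced time \<open>\<psi>\<close>, the kernel bound \<open>|u(s,\<tau>)| \<le> K exp(-\<lambda>(s - \<tau>))\<close>
  and the \<open>p\<close>-periodicity of the jumps give \<open>sup |d| \<le> (M\<^sub>f + H\<^sub>0 L\<^sub>f) cbar sup |d|\<close>,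
  whence \<open>d = 0\<close> by (C5).\<close>

lemma strict_mono_int_step:
  fixes s :: "int \<Rightarrow> 'a::order"
  assumes "\<And>j. s j < s (j + 1)"
  shows "strict_mono s"
proof
  fix i j :: int assume "i < j"
  then show "s i < s j"
  proof (induction j rule: int_gr_induct)
    case (step j)
    then show ?case using assms[of j] by order
  qed (use assms in simp)
qed

lemma le_at_left_endpoint:
  fixes u v :: "real \<Rightarrow> real"
  assumes "continuous_on {z..b} u" "continuous_on {z..b} v" "z < b"
    and "\<And>\<tau>. z < \<tau> \<Longrightarrow> \<tau> \<le> b \<Longrightarrow> u \<tau> \<le> v \<tau>"
  shows "u z \<le> v z"
proof (rule tendsto_le[OF trivial_limit_at_right_real])
  show "(v \<longlongrightarrow> v z) (at_right z)" "(u \<longlongrightarrow> u z) (at_right z)"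
    using assms(1-3) by (auto intro: continuous_on_Icc_at_rightD)
  show "\<forall>\<^sub>F \<tau> in at_right z. u \<tau> \<le> v \<tau>"
    using eventually_at_right_real[OF assms(3)] by eventually_elim (use assms(4) in auto)
qed

lemma le_of_le_add_geometric:
  fixes X Y c q :: real
  assumes "\<And>M. M \<ge> 1 \<Longrightarrow> X \<le> Y + c * q ^ M" "0 \<le> q" "q < 1"
  shows "X \<le> Y"
proof (rule tendsto_lowerbound)
  show "(\<lambda>M. Y + c * q ^ M) \<longlonglongrightarrow> Y"
    using assms(2,3) by (auto intro!: tendsto_eq_intros LIMSEQ_power_zero)
  show "\<forall>\<^sub>F M in sequentially. X \<le> Y + c * q ^ M"
    using eventually_ge_at_top[of 1] by eventually_elim (rule assms(1))
qed simp

lemma sum_power_div_blocks: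
  fixes q :: "'a::comm_semiring_1"
  shows "(\<Sum>i<M * p. q ^ (i div p)) = of_nat p * (\<Sum>j<M. q ^ j)"
proof (induction M)
  case (Suc M)
  have "(\<Sum>i<Suc M * p. q ^ (i div p))
      = (\<Sum>i<M*p. q ^ (i div p)) + (\<Sum>i\<in>{M*p..<M*p+p}. q ^ (i div p))"
    by (simp add: sum.atLeastLessThan_concat[symmetric] lessThan_atLeast0 add.commute)
  also have "(\<Sum>i\<in>{M*p..<M*p+p}. q ^ (i div p)) = (\<Sum>i\<in>{M*p..<M*p+p}. q ^ M)"
  proof (intro sum.cong refl)
    fix i assume "i \<in> {M*p..<M*p+p}"
    then have "i div p = M" by (intro div_nat_eqI) (auto simp: algebra_simps)
    then show "q ^ (i div p) = q ^ M" by simp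
  qed
  finally show ?case using Suc by (simp add: algebra_simps)
qed simp

section \<open>The time scale\<close>

locale time_scale =
  fixes \<theta> :: "int \<Rightarrow> real"
  assumes mono: "strict_mono \<theta>"
begin

lemma theta_less_iff [simp]: "\<theta> i < \<theta> j \<longleftrightarrow> i < j"
  using mono by (rule strict_mono_less)

lemma theta_le_iff [simp]: "\<theta> i \<le> \<theta> j \<longleftrightarrow> i \<le> j"
  using mono by (rule strict_mono_less_eq)

lemma dlt_pos: "0 < dlt \<theta> j"
  unfolding dlt_def by simp

lemma eta_pos: "0 < eta \<theta> j"
  unfolding eta_def by simp

lemma strict_mono_by_eta:
  assumes "\<And>j. s j - s (j - 1) = eta \<theta> j"
  shows "strict_mono s"
proof (rule strict_mono_int_step)
  show "s j < s (j + 1)" for j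
    using assms[of "j + 1"] eta_pos[of "j + 1"] by simp
qed

end

locale anchored_time_scale = time_scale +
  assumes theta_neg: "\<theta> (-1) < 0" and theta_pos: "0 < \<theta> 0"
begin

lemma theta_even_pos_iff: "0 < \<theta> (2*j) \<longleftrightarrow> 0 \<le> j"
proof
  assume "0 < \<theta> (2*j)"
  then have "\<not> \<theta> (2*j) < \<theta> (-1)" using theta_neg by linarith
  then show "0 \<le> j" by simp
qed (use theta_pos theta_le_iff[of 0 "2*j"] in linarith)

lemma theta_even_neg_iff: "\<theta> (2*j) < 0 \<longleftrightarrow> j < 0"
proof
  assume "j < 0"
  then have "\<theta> (2*j) < \<theta> (-1)" by simp
  then show "\<theta> (2*j) < 0" using theta_neg by linarith
qed (use theta_even_pos_iff[of j] in linarith)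

lemma sk_nonneg_index:
  assumes "0 \<le> k"
  shows "sk \<theta> k = \<theta> (2*k) - (\<Sum>j\<in>{0..<k}. dlt \<theta> j)"
proof -
  have "(0 < \<theta> (2*j) \<and> \<theta> (2*j) < \<theta> (2*k)) \<longleftrightarrow> j \<in> {0..<k}" for j
    using theta_even_pos_iff[of j] by simp
  then have "{j. 0 < \<theta> (2*j) \<and> \<theta> (2*j) < \<theta> (2*k)} = {0..<k}"
    by blast
  moreover have "0 \<le> \<theta> (2*k)" using theta_even_pos_iff[of k] assms by simp
  ultimately show ?thesis unfolding sk_def psi_def by simp
qed

lemma sk_neg_index:
  assumes "k < 0"
  shows "sk \<theta> k = \<theta> (2*k) + (\<Sum>j\<in>{k..-1}. dlt \<theta> j)"
proof -
  have "(\<theta> (2*k) \<le> \<theta> (2*j) \<and> \<theta> (2*j) < 0) \<longleftrightarrow> j \<in> {k..-1}" for j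
    using theta_even_neg_iff[of j] by auto
  then have "{j. \<theta> (2*k) \<le> \<theta> (2*j) \<and> \<theta> (2*j) < 0} = {k..-1}"
    by blast
  moreover have "\<not> 0 \<le> \<theta> (2*k)" using theta_even_neg_iff[of k] assms by simp
  ultimately show ?thesis unfolding sk_def psi_def by simp
qed

text \<open>\<open>psi\<close> collapses every jump interval \<open>[\<theta> (2*k), \<theta> (2*k + 1)]\<close> to a point.\<close>

lemma sk_diff: "sk \<theta> j - sk \<theta> (j - 1) = eta \<theta> j"
proof -
  consider "1 \<le> j" | "j = 0" | "j \<le> -1" by linarith
  then show ?thesis
  proof cases
    case 1
    then have "{0..<j} = insert (j - 1) {0..<j - 1}" by auto
    then have "(\<Sum>i\<in>{0..<j}. dlt \<theta> i) = dlt \<theta> (j - 1) + (\<Sum>i\<in>{0..<j - 1}. dlt \<theta> i)"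
      by simp
    then show ?thesis using 1 sk_nonneg_index[of j] sk_nonneg_index[of "j - 1"]
      by (simp add: dlt_def eta_def)
  next
    case 2
    then show ?thesis using sk_nonneg_index[of 0] sk_neg_index[of "-1"]
      by (simp add: dlt_def eta_def)
  next
    case 3
    then have "{j - 1..-1} = insert (j - 1) {j..-1}" by auto
    then have "(\<Sum>i\<in>{j - 1..-1}. dlt \<theta> i) = dlt \<theta> (j - 1) + (\<Sum>i\<in>{j..-1}. dlt \<theta> i)"
      by simp
    then show ?thesis using 3 sk_neg_index[of j] sk_neg_index[of "j - 1"]
      by (simp add: dlt_def eta_def)
  qed
qed

lemma sk_strict_mono: "strict_mono (sk \<theta>)"
  using sk_diff by (rule strict_mono_by_eta)

lemma sk_telescope: "sk \<theta> (int N) - sk \<theta> 0 = (\<Sum>k\<in>{1..int N}. eta \<theta> k)"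
proof (induction N)
  case (Suc N)
  have "{1..1 + int N} = insert (1 + int N) {1..int N}" by auto
  then show ?case using Suc sk_diff[of "1 + int N"] by simp
qed simp

lemma uu_eq:
  assumes "sk \<theta> (l - 1) < \<tau>" "\<tau> \<le> sk \<theta> l" "sk \<theta> k < s" "s \<le> sk \<theta> (k + 1)"
  shows "uu \<theta> a s \<tau> = exp (- a * (s - \<tau>)) * (\<Prod>\<nu>\<in>{l..k}. 1 - dlt \<theta> \<nu> * a)"
proof -
  have index_unique: "i = j"
    if "sk \<theta> i < x" "x \<le> sk \<theta> (i + 1)" "sk \<theta> j < x" "x \<le> sk \<theta> (j + 1)" for i j x
    using that strict_mono_less[OF sk_strict_mono, of i "j + 1"]
      strict_mono_less[OF sk_strict_mono, of j "i + 1"] by linarith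
  have "(THE l. sk \<theta> (l - 1) < \<tau> \<and> \<tau> \<le> sk \<theta> l) = l"
    using assms(1,2) by (intro the_equality) (auto dest: index_unique)
  moreover have "(THE k. sk \<theta> k < s \<and> s \<le> sk \<theta> (k + 1)) = k"
    using assms(3,4) by (intro the_equality) (auto dest: index_unique)
  ultimately show ?thesis unfolding uu_def Let_def by simp
qed

end

locale periodic_time_scale = anchored_time_scale +
  fixes p :: nat and \<omega> :: real
  assumes p_pos: "1 \<le> p" and periodic: "\<And>k. \<theta> (k + 2 * int p) = \<theta> k + \<omega>"
begin

lemma theta_shift: "\<theta> (k + 2 * int p * q) = \<theta> k + of_int q * \<omega>"
proof (induction q rule: int_induct[where k = 0])
  case (step1 q)
  then show ?case using periodic[of "k + 2 * int p * q"] by (simp add: algebra_simps)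
next
  case (step2 q)
  then show ?case using periodic[of "k + 2 * int p * (q - 1)"] by (simp add: algebra_simps)
qed simp

lemma dlt_shift: "dlt \<theta> (j + int p * q) = dlt \<theta> j"
  using theta_shift[of "2*j + 1" q] theta_shift[of "2*j" q]
  unfolding dlt_def by (simp add: algebra_simps)

lemma eta_shift: "eta \<theta> (j + int p * q) = eta \<theta> j"
  using theta_shift[of "2*j" q] theta_shift[of "2*j - 1" q]
  unfolding eta_def by (simp add: algebra_simps)

lemma sk_periodic: "sk \<theta> (j + int p) = sk \<theta> j + psi_om \<theta> p"
proof -
  define g where "g j = sk \<theta> (j + int p) - sk \<theta> j" for j
  have g_step: "g j = g (j - 1)" for j
  proof -
    have index: "j + int p - 1 = j - 1 + int p" by simp
    have "sk \<theta> (j + int p) - sk \<theta> (j - 1 + int p) = eta \<theta> j"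
      using sk_diff[of "j + int p"] eta_shift[of j 1] unfolding index by simp
    then show ?thesis using sk_diff[of j] unfolding g_def by linarith
  qed
  have "g j = g 0" for j
  proof (induction j rule: int_induct[where k = 0])
    case (step1 i)
    then show ?case using g_step[of "i + 1"] by simp
  next
    case (step2 i)
    then show ?case using g_step[of i] by simp
  qed simp
  moreover have "g 0 = psi_om \<theta> p"
    unfolding g_def psi_om_def using sk_telescope[of p] by simp
  ultimately have "g j = psi_om \<theta> p" by simp
  then show ?thesis unfolding g_def by simp
qed

lemma psi_om_pos: "0 < psi_om \<theta> p"
  unfolding psi_om_def using p_pos eta_pos by (intro sum_pos) auto

lemma dlt_le_dmax: "dlt \<theta> j \<le> dmax \<theta> p"
proof -
  define j' where "j' = (j - 1) mod int p + 1"
  have "j = j' + int p * ((j - 1) div int p)" unfolding j'_def by simp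
  then have "dlt \<theta> j = dlt \<theta> j'" using dlt_shift by metis
  moreover have "j' \<in> {1..int p}"
  proof -
    have "0 \<le> (j - 1) mod int p" "(j - 1) mod int p < int p" using p_pos by simp_all
    then show ?thesis unfolding j'_def by simp
  qed
  ultimately show ?thesis unfolding dmax_def by simp
qed

end

section \<open>A scalar linear impulsive equation\<close>

lemma abs_increment_le_dominating_increment:
  fixes \<phi> \<psi> \<phi>' \<psi>' :: "real \<Rightarrow> real"
  assumes "a \<le> b" "continuous_on {a..b} \<phi>" "continuous_on {a..b} \<psi>"
    and "\<And>x. a < x \<Longrightarrow> x < b \<Longrightarrow> (\<phi> has_real_derivative \<phi>' x) (at x)"
    and "\<And>x. a < x \<Longrightarrow> x < b \<Longrightarrow> (\<psi> has_real_derivative \<psi>' x) (at x)"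
    and "\<And>x. a < x \<Longrightarrow> x < b \<Longrightarrow> \<bar>\<phi>' x\<bar> \<le> \<psi>' x"
  shows "\<bar>\<phi> b - \<phi> a\<bar> \<le> \<psi> b - \<psi> a"
proof -
  have "(\<lambda>x. \<phi> x - \<psi> x) b \<le> (\<lambda>x. \<phi> x - \<psi> x) a"
  proof (rule DERIV_nonpos_imp_decreasing_open[OF assms(1)])
    fix x assume "a < x" "x < b"
    with assms(4,5) assms(6)[of x] show "\<exists>y. ((\<lambda>x. \<phi> x - \<psi> x) has_real_derivative y) (at x) \<and> y \<le> 0"
      by (intro exI[of _ "\<phi>' x - \<psi>' x"] conjI DERIV_diff) (auto simp: abs_le_iff)
  qed (intro continuous_intros assms(2,3))
  moreover have "(\<lambda>x. \<phi> x + \<psi> x) a \<le> (\<lambda>x. \<phi> x + \<psi> x) b"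
  proof (rule DERIV_nonneg_imp_increasing_open[OF assms(1)])
    fix x assume "a < x" "x < b"
    with assms(4,5) assms(6)[of x] show "\<exists>y. ((\<lambda>x. \<phi> x + \<psi> x) has_real_derivative y) (at x) \<and> 0 \<le> y"
      by (intro exI[of _ "\<phi>' x + \<psi>' x"] conjI DERIV_add) (auto simp: abs_le_iff)
  qed (intro continuous_intros assms(2,3))
  ultimately show ?thesis by simp
qed

text \<open>The function \<open>s\<close> stands for \<open>j \<mapsto> \<psi>(\<theta>\<^sub>2\<^sub>j)\<close>, and \<open>kernel_bound\<close> is the estimate
  \<open>|u(\<sigma>,\<tau>)| \<le> K exp(-\<mu>(\<sigma> - \<tau>))\<close> of the Cauchy kernel, with decay rate \<open>\<mu> = \<lambda>\<^sub>i\<^sub>j\<close>.\<close>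

locale impulsive_linear_eq = time_scale +
  fixes s :: "int \<Rightarrow> real" and a \<mu> K W \<delta> G B :: real and p :: nat and d g :: "real \<Rightarrow> real"
  assumes s_diff: "\<And>j. s j - s (j - 1) = eta \<theta> j"
    and s_periodic: "\<And>j. s (j + int p) = s j + W"
    and W_pos: "0 < W" and p_pos: "1 \<le> p" and a_pos: "0 < a" and \<mu>_pos: "0 < \<mu>"
    and kernel_bound: "\<And>l k \<tau> \<sigma>. s (l - 1) < \<tau> \<Longrightarrow> \<tau> \<le> s l \<Longrightarrow> s k < \<sigma> \<Longrightarrow> \<sigma> \<le> s (k + 1) \<Longrightarrow>
       \<tau> \<le> \<sigma> \<Longrightarrow> \<bar>exp (- a * (\<sigma> - \<tau>)) * (\<Prod>\<nu>\<in>{l..k}. 1 - dlt \<theta> \<nu> * a)\<bar> \<le> K * exp (- \<mu> * (\<sigma> - \<tau>))"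
    and dlt_le: "\<And>j. dlt \<theta> j \<le> \<delta>"
    and d_cont: "\<And>j. continuous_on {\<theta> (2*j - 1)..\<theta> (2*j)} d"
    and d_deriv: "\<And>j t. t \<in> {\<theta> (2*j - 1)..\<theta> (2*j)} \<Longrightarrow>
        (d has_real_derivative - a * d t + g t) (at t within {\<theta> (2*j - 1)..\<theta> (2*j)})"
    and d_jump: "\<And>j. d (\<theta> (2*j + 1)) = (1 - dlt \<theta> j * a) * d (\<theta> (2*j)) + dlt \<theta> j * g (\<theta> (2*j))"
    and g_bounded: "\<And>j t. t \<in> {\<theta> (2*j - 1)..\<theta> (2*j)} \<Longrightarrow> \<bar>g t\<bar> \<le> G"
    and d_bounded: "\<And>j t. t \<in> {\<theta> (2*j - 1)..\<theta> (2*j)} \<Longrightarrow> \<bar>d t\<bar> \<le> B"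
begin

lemma s_strict_mono: "strict_mono s"
  using s_diff by (rule strict_mono_by_eta)

lemma s_less_iff [simp]: "s i < s j \<longleftrightarrow> i < j"
  using s_strict_mono by (rule strict_mono_less)

lemma s_le_iff [simp]: "s i \<le> s j \<longleftrightarrow> i \<le> j"
  using s_strict_mono by (rule strict_mono_less_eq)

lemma s_shift_back: "s (j - int p * int M) = s j - real M * W"
proof (induction M)
  case (Suc M)
  have "s (j - int p * int (Suc M)) + W = s (j - int p * int M)"
    using s_periodic[of "j - int p * int (Suc M)"] by (simp add: algebra_simps)
  with Suc show ?case by (simp add: algebra_simps)
qed simp

lemma K_nonneg: "0 \<le> K"
  using kernel_bound[of 0 "s 0" "-1" "s 0"] by simp

end

locale impulsive_linear_eq_at = impulsive_linear_eq +
  fixes k :: int and t :: real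
  assumes t_in: "\<theta> (2*k - 1) < t" "t \<le> \<theta> (2*k)"
begin

text \<open>\<open>s_t\<close> and \<open>s_at j \<sigma>\<close> are the reduced times \<open>\<psi>(t)\<close> and \<open>\<psi>(\<sigma>)\<close> for \<open>\<sigma>\<close> in the
  \<open>j\<close>-th interval of \<open>T0\<close>. Variation of constants: \<open>weighted k t = d t\<close>, on the \<open>j\<close>-th interval the derivative of
  \<open>weighted j\<close> involves only \<open>g\<close>, and across the \<open>j\<close>-th jump it changes by the impulse
  \<open>dlt \<theta> j * g\<close>. Summing these increments backwards over many intervals bounds \<open>d t\<close>.\<close>

definition s_t :: real where "s_t = s k - (\<theta> (2*k) - t)"
definition s_at :: "int \<Rightarrow> real \<Rightarrow> real" where "s_at j \<sigma> = s j - (\<theta> (2*j) - \<sigma>)"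
definition jump_prod :: "int \<Rightarrow> real" where "jump_prod j = (\<Prod>\<nu>\<in>{j..k - 1}. 1 - dlt \<theta> \<nu> * a)"
definition weighted :: "int \<Rightarrow> real \<Rightarrow> real"
  where "weighted j \<sigma> = jump_prod j * (exp (- a * (s_t - s_at j \<sigma>)) * d \<sigma>)"
definition envelope :: "int \<Rightarrow> real \<Rightarrow> real"
  where "envelope j \<sigma> = G * K / \<mu> * exp (- \<mu> * (s_t - s_at j \<sigma>))"

lemma G_nonneg: "0 \<le> G"
  using g_bounded[of t k] t_in by force

lemma s_t_bounds: "s (k - 1) < s_t" "s_t \<le> s k"
  using s_diff[of k] t_in unfolding s_t_def eta_def by auto

lemma s_less_s_t: "j < k \<Longrightarrow> s j < s_t"
  using s_t_bounds(1) s_le_iff[of j "k - 1"] by linarith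

lemma s_at_t: "s_at k t = s_t"
  unfolding s_at_def s_t_def by simp

lemma s_at_right_end: "s_at j (\<theta> (2*j)) = s j"
  unfolding s_at_def by simp

lemma s_at_left_end: "s_at j (\<theta> (2*j - 1)) = s (j - 1)"
  unfolding s_at_def using s_diff[of j] by (simp add: eta_def)

lemma jump_prod_k: "jump_prod k = 1"
  unfolding jump_prod_def by simp

lemma jump_prod_step: "j \<le> k \<Longrightarrow> jump_prod (j - 1) = (1 - dlt \<theta> (j - 1) * a) * jump_prod j"
proof -
  assume "j \<le> k"
  then have "{j - 1..k - 1} = insert (j - 1) {j..k - 1}" by auto
  then show ?thesis unfolding jump_prod_def by simp
qed

lemma jump_prod_kernel_bound:
  assumes "s (j - 1) < \<tau>" "\<tau> \<le> s j" "\<tau> \<le> s_t"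
  shows "\<bar>jump_prod j * exp (- a * (s_t - \<tau>))\<bar> \<le> K * exp (- \<mu> * (s_t - \<tau>))"
  using kernel_bound[of j \<tau> "k - 1" s_t] assms s_t_bounds
  unfolding jump_prod_def by (simp add: mult.commute)

lemma weighted_has_derivative:
  assumes "\<theta> (2*j - 1) < \<sigma>" "\<sigma> < \<theta> (2*j)"
  shows "(weighted j has_real_derivative jump_prod j * exp (- a * (s_t - s_at j \<sigma>)) * g \<sigma>) (at \<sigma>)"
proof -
  define e where "e \<sigma> = exp (- a * (s_t - s_at j \<sigma>))" for \<sigma>
  have "(d has_real_derivative - a * d \<sigma> + g \<sigma>) (at \<sigma>)"
    using d_deriv[of \<sigma> j] assms at_within_Icc_at[of "\<theta> (2*j - 1)" \<sigma> "\<theta> (2*j)"] by simp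
  moreover have "(e has_real_derivative e \<sigma> * a) (at \<sigma>)"
    unfolding e_def s_at_def by (auto intro!: derivative_eq_intros)
  ultimately have "((\<lambda>\<sigma>. jump_prod j * (e \<sigma> * d \<sigma>)) has_real_derivative
      jump_prod j * (e \<sigma> * a * d \<sigma> + (- a * d \<sigma> + g \<sigma>) * e \<sigma>)) (at \<sigma>)"
    by (intro DERIV_cmult DERIV_mult)
  then show ?thesis
    unfolding weighted_def[abs_def] e_def[symmetric] by (rule DERIV_cong) (simp add: algebra_simps)
qed

lemma envelope_has_derivative:
  "(envelope j has_real_derivative G * K * exp (- \<mu> * (s_t - s_at j \<sigma>))) (at \<sigma>)"
  unfolding envelope_def[abs_def] s_at_def using \<mu>_pos
  by (auto intro!: derivative_eq_intros)

lemma weighted_increment_interval: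
  assumes u: "\<theta> (2*j - 1) \<le> u" "u \<le> \<theta> (2*j)" "s_at j u \<le> s_t"
  shows "\<bar>weighted j u - weighted j (\<theta> (2*j - 1))\<bar> \<le> envelope j u - envelope j (\<theta> (2*j - 1))"
proof (rule abs_increment_le_dominating_increment[OF u(1)])
  have "continuous_on {\<theta> (2*j - 1)..u} d"
    by (rule continuous_on_subset[OF d_cont[of j]]) (use u(2) in auto)
  then show "continuous_on {\<theta> (2*j - 1)..u} (weighted j)" "continuous_on {\<theta> (2*j - 1)..u} (envelope j)"
    unfolding weighted_def envelope_def s_at_def using \<mu>_pos by (auto intro!: continuous_intros)
  fix \<sigma> assume \<sigma>: "\<theta> (2*j - 1) < \<sigma>" "\<sigma> < u"
  with u show "(weighted j has_real_derivative jump_prod j * exp (- a * (s_t - s_at j \<sigma>)) * g \<sigma>) (at \<sigma>)"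
    by (intro weighted_has_derivative) auto
  show "(envelope j has_real_derivative G * K * exp (- \<mu> * (s_t - s_at j \<sigma>))) (at \<sigma>)"
    by (rule envelope_has_derivative)
  have "\<bar>jump_prod j * exp (- a * (s_t - s_at j \<sigma>))\<bar> \<le> K * exp (- \<mu> * (s_t - s_at j \<sigma>))"
    using \<sigma> u s_diff[of j] by (intro jump_prod_kernel_bound) (auto simp: s_at_def eta_def)
  moreover have "\<bar>g \<sigma>\<bar> \<le> G" using g_bounded[of \<sigma> j] \<sigma> u by simp
  ultimately have "\<bar>jump_prod j * exp (- a * (s_t - s_at j \<sigma>))\<bar> * \<bar>g \<sigma>\<bar> \<le> K * exp (- \<mu> * (s_t - s_at j \<sigma>)) * G"
    by (intro mult_mono) auto
  then show "\<bar>jump_prod j * exp (- a * (s_t - s_at j \<sigma>)) * g \<sigma>\<bar> \<le> G * K * exp (- \<mu> * (s_t - s_at j \<sigma>))"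
    by (simp add: abs_mult algebra_simps)
qed

text \<open>The value of \<open>jump_prod j * exp (- a * (s_t - s (j - 1)))\<close> is not covered by
  \<open>kernel_bound\<close> (there \<open>\<tau> > s (j - 1)\<close>); it is reached as a limit from the right.\<close>

lemma jump_prod_kernel_bound_left:
  assumes "j \<le> k"
  shows "\<bar>jump_prod j * exp (- a * (s_t - s (j - 1)))\<bar> \<le> K * exp (- \<mu> * (s_t - s (j - 1)))"
proof (rule le_at_left_endpoint[where b = "min (s j) s_t"
    and u = "\<lambda>\<tau>. \<bar>jump_prod j * exp (- a * (s_t - \<tau>))\<bar>" and v = "\<lambda>\<tau>. K * exp (- \<mu> * (s_t - \<tau>))"])
  show "s (j - 1) < min (s j) s_t" using s_less_s_t[of "j - 1"] assms by simp
  fix \<tau> assume "s (j - 1) < \<tau>" "\<tau> \<le> min (s j) s_t"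
  then show "\<bar>jump_prod j * exp (- a * (s_t - \<tau>))\<bar> \<le> K * exp (- \<mu> * (s_t - \<tau>))"
    by (intro jump_prod_kernel_bound) auto
qed (intro continuous_intros)+

lemma weighted_increment_jump:
  assumes "j \<le> k"
  shows "\<bar>weighted j (\<theta> (2*j - 1)) - weighted (j - 1) (\<theta> (2*(j - 1)))\<bar>
    \<le> \<delta> * G * K * exp (- \<mu> * (s_t - s (j - 1)))"
proof -
  define e where "e = jump_prod j * exp (- a * (s_t - s (j - 1)))"
  define impulse where "impulse = dlt \<theta> (j - 1) * g (\<theta> (2*(j - 1)))"
  have jump: "d (\<theta> (2*j - 1)) = (1 - dlt \<theta> (j - 1) * a) * d (\<theta> (2*(j - 1))) + impulse"
    using d_jump[of "j - 1"] unfolding impulse_def by (simp add: algebra_simps)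
  have "\<bar>weighted j (\<theta> (2*j - 1)) - weighted (j - 1) (\<theta> (2*(j - 1)))\<bar> = \<bar>e\<bar> * \<bar>impulse\<bar>"
    unfolding weighted_def e_def s_at_left_end s_at_right_end jump jump_prod_step[OF assms]
    by (simp add: abs_mult[symmetric] algebra_simps)
  also have "\<dots> \<le> K * exp (- \<mu> * (s_t - s (j - 1))) * (\<delta> * G)"
  proof (rule mult_mono)
    show "\<bar>impulse\<bar> \<le> \<delta> * G"
      using dlt_pos[of "j - 1"] dlt_le[of "j - 1"] g_bounded[of "\<theta> (2*(j - 1))" "j - 1"] G_nonneg
      unfolding impulse_def by (auto simp: abs_mult intro: mult_mono)
  qed (use jump_prod_kernel_bound_left[OF assms] K_nonneg in \<open>auto simp: e_def\<close>)
  finally show ?thesis by (simp add: algebra_simps)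
qed

lemma envelope_left_end: "envelope j (\<theta> (2*j - 1)) = G * K / \<mu> * exp (- \<mu> * (s_t - s (j - 1)))"
  unfolding envelope_def s_at_left_end ..

lemma envelope_right_end: "envelope j (\<theta> (2*j)) = G * K / \<mu> * exp (- \<mu> * (s_t - s j))"
  unfolding envelope_def s_at_right_end ..

lemma abs_d_le_telescoped:
  assumes "j \<le> k"
  shows "\<bar>d t\<bar> \<le> \<bar>weighted j (\<theta> (2*j - 1))\<bar> + G * K / \<mu> * (1 - exp (- \<mu> * (s_t - s (j - 1))))
    + \<delta> * G * K * (\<Sum>i\<in>{j..k - 1}. exp (- \<mu> * (s_t - s i)))"
  using assms
proof (induction j rule: int_le_induct)
  case base
  have "weighted k t = d t" unfolding weighted_def jump_prod_k s_at_t by simp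
  moreover have "envelope k t = G * K / \<mu>" unfolding envelope_def s_at_t by simp
  ultimately show ?case
    using weighted_increment_interval[of k t] t_in s_at_t envelope_left_end[of k]
    by (simp add: algebra_simps)
next
  case (step j)
  have "{j - 1..k - 1} = insert (j - 1) {j..k - 1}" using step.hyps by auto
  then have "(\<Sum>i\<in>{j - 1..k - 1}. exp (- \<mu> * (s_t - s i)))
      = exp (- \<mu> * (s_t - s (j - 1))) + (\<Sum>i\<in>{j..k - 1}. exp (- \<mu> * (s_t - s i)))"
    by simp
  moreover have "\<bar>weighted (j - 1) (\<theta> (2*(j - 1))) - weighted (j - 1) (\<theta> (2*(j - 1) - 1))\<bar>
      \<le> envelope (j - 1) (\<theta> (2*(j - 1))) - envelope (j - 1) (\<theta> (2*(j - 1) - 1))"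
    using s_less_s_t[of "j - 1"] s_at_right_end[of "j - 1"] step.hyps
    by (intro weighted_increment_interval) auto
  ultimately show ?case
    using step.IH weighted_increment_jump[OF step.hyps]
      envelope_left_end[of "j - 1"] envelope_right_end[of "j - 1"]
    by (simp add: algebra_simps)
qed

lemma weighted_tail_bound:
  assumes "j < k"
  shows "\<bar>weighted j (\<theta> (2*j - 1))\<bar> \<le> K * B * exp (- \<mu> * (s_t - s j))"
proof -
  have "\<bar>weighted j (\<theta> (2*j - 1))\<bar>
      = \<bar>jump_prod j * exp (- a * (s_t - s j))\<bar> * exp (- a * (s j - s (j - 1))) * \<bar>d (\<theta> (2*j - 1))\<bar>"
    unfolding weighted_def s_at_left_end by (simp add: abs_mult exp_add[symmetric] algebra_simps)
  also have "\<dots> \<le> K * exp (- \<mu> * (s_t - s j)) * 1 * B"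
  proof (intro mult_mono)
    show "\<bar>jump_prod j * exp (- a * (s_t - s j))\<bar> \<le> K * exp (- \<mu> * (s_t - s j))"
      using s_less_s_t[OF assms] by (intro jump_prod_kernel_bound) auto
    show "exp (- a * (s j - s (j - 1))) \<le> 1" using a_pos by simp
    show "\<bar>d (\<theta> (2*j - 1))\<bar> \<le> B" using d_bounded[of "\<theta> (2*j - 1)" j] by simp
  qed (use K_nonneg in auto)
  finally show ?thesis by (simp add: algebra_simps)
qed

lemma kernel_term_bound:
  assumes "i < k"
  shows "exp (- \<mu> * (s_t - s i)) \<le> exp (- \<mu> * W) ^ (nat (k - 1 - i) div p)"
proof -
  define n where "n = nat (k - 1 - i)"
  have "i = (k - 1 - int (n mod p)) - int p * int (n div p)"
    using assms unfolding n_def by (simp add: of_nat_mod of_nat_div algebra_simps)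
  then have "s i = s (k - 1 - int (n mod p)) - real (n div p) * W"
    using s_shift_back by metis
  moreover have "s (k - 1 - int (n mod p)) \<le> s (k - 1)" by simp
  ultimately have "real (n div p) * W \<le> s_t - s i" using s_t_bounds by linarith
  then have "exp (- \<mu> * (s_t - s i)) \<le> exp (real (n div p) * (- \<mu> * W))"
    using \<mu>_pos by simp
  then show ?thesis unfolding n_def exp_of_nat_mult .
qed

lemma kernel_sum_bound:
  "(\<Sum>i\<in>{k - int (M * p)..k - 1}. exp (- \<mu> * (s_t - s i))) \<le> real p / (1 - exp (- \<mu> * W))"
proof -
  define q where "q = exp (- \<mu> * W)"
  have q: "0 \<le> q" "q < 1" unfolding q_def using \<mu>_pos W_pos by auto
  have "(\<Sum>i\<in>{k - int (M * p)..k - 1}. exp (- \<mu> * (s_t - s i)))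
      \<le> (\<Sum>i\<in>{k - int (M * p)..k - 1}. q ^ (nat (k - 1 - i) div p))"
    unfolding q_def by (intro sum_mono kernel_term_bound) auto
  also have "\<dots> = (\<Sum>n<M * p. q ^ (n div p))"
  proof -
    have "(\<Sum>i\<in>{k - int N..k - 1}. h (nat (k - 1 - i))) = (\<Sum>n<N. h n)" for N and h :: "nat \<Rightarrow> real"
      by (rule sum.reindex_bij_witness[of _ "\<lambda>n. k - 1 - int n" "\<lambda>i. nat (k - 1 - i)"])
        (auto simp: nat_less_iff)
    then show ?thesis .
  qed
  also have "\<dots> = real p * ((1 - q ^ M) / (1 - q))"
    using q by (simp add: sum_power_div_blocks sum_gp_strict)
  also have "\<dots> \<le> real p / (1 - q)"
  proof -
    have "real p * (1 - q ^ M) \<le> real p" using q by (simp add: mult_left_le)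
    then show ?thesis using q by (simp add: divide_right_mono)
  qed
  finally show ?thesis unfolding q_def .
qed

lemma abs_d_le_geometric:
  assumes "1 \<le> M"
  shows "\<bar>d t\<bar> \<le> G * (K / \<mu> + real p * \<delta> * K / (1 - exp (- \<mu> * W)))
    + K * B * exp (\<mu> * (s k - s_t)) * exp (- \<mu> * W) ^ M"
proof -
  define j where "j = k - int (M * p)"
  have j: "j < k" unfolding j_def using assms p_pos by simp
  have sj: "s j = s k - real M * W"
    using s_shift_back[of k M] unfolding j_def by (simp add: mult.commute)
  have "exp (- \<mu> * (s_t - s j)) = exp (\<mu> * (s k - s_t)) * exp (real M * (- \<mu> * W))"
    unfolding sj by (simp add: exp_add[symmetric] algebra_simps)
  then have "exp (- \<mu> * (s_t - s j)) = exp (\<mu> * (s k - s_t)) * exp (- \<mu> * W) ^ M"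
    unfolding exp_of_nat_mult .
  then have "\<bar>weighted j (\<theta> (2*j - 1))\<bar> \<le> K * B * exp (\<mu> * (s k - s_t)) * exp (- \<mu> * W) ^ M"
    using weighted_tail_bound[OF j] by simp
  moreover have "G * K / \<mu> * (1 - exp (- \<mu> * (s_t - s (j - 1)))) \<le> G * K / \<mu>"
    using mult_left_mono[of "1 - exp (- \<mu> * (s_t - s (j - 1)))" 1 "G * K / \<mu>"]
      G_nonneg K_nonneg \<mu>_pos by simp
  moreover have "\<delta> * G * K * (\<Sum>i\<in>{j..k - 1}. exp (- \<mu> * (s_t - s i)))
      \<le> \<delta> * G * K * (real p / (1 - exp (- \<mu> * W)))"
    using kernel_sum_bound[of M] dlt_le[of 0] dlt_pos[of 0] G_nonneg K_nonneg
    unfolding j_def by (intro mult_left_mono) auto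
  ultimately show ?thesis
    using abs_d_le_telescoped[of j] j by (simp add: algebra_simps)
qed

lemma abs_d_le_forcing_bound:
  "\<bar>d t\<bar> \<le> G * (K / \<mu> + real p * \<delta> * K / (1 - exp (- \<mu> * W)))"
  by (rule le_of_le_add_geometric[OF abs_d_le_geometric]) (use \<mu>_pos W_pos in auto)

end

section \<open>The network\<close>

lemma finite_cells: "finite (cells m n)"
  unfolding cells_def by simp

lemma nbhd_subset_cells: "nbhd m n r c \<subseteq> cells m n"
  unfolding nbhd_def by auto

lemma abs_le_vnorm: "c \<in> cells m n \<Longrightarrow> \<bar>v c\<bar> \<le> vnorm m n v"
  unfolding vnorm_def by (rule Max_ge) (auto simp: finite_cells)

lemma mem_T0I: "t \<in> {\<theta> (2*k - 1)..\<theta> (2*k)} \<Longrightarrow> t \<in> T0 \<theta>"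
  unfolding T0_def by blast

lemma mem_T0E:
  assumes "t \<in> T0 \<theta>"
  obtains k where "t \<in> {\<theta> (2*k - 1)..\<theta> (2*k)}"
  using assms unfolding T0_def by blast

lemma abs_product_difference_le:
  fixes f :: "real \<Rightarrow> real"
  assumes "\<And>s. \<bar>f s\<bar> \<le> Mf" "\<And>s1 s2. \<bar>f s1 - f s2\<bar> \<le> Lf * \<bar>s1 - s2\<bar>" "0 \<le> Lf"
    and "\<bar>x\<bar> \<le> H" "\<bar>y - x\<bar> \<le> D" "\<bar>y' - x'\<bar> \<le> D"
  shows "\<bar>f y' * y - f x' * x\<bar> \<le> (Mf + H * Lf) * D"
proof -
  have "0 \<le> Mf" using assms(1)[of 0] by linarith
  then have "\<bar>f y' * (y - x)\<bar> \<le> Mf * D"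
    unfolding abs_mult using assms(1,5) by (intro mult_mono) auto
  moreover have "\<bar>f y' - f x'\<bar> \<le> Lf * D"
    using assms(2)[of y' x'] mult_left_mono[OF assms(6,3)] by linarith
  then have "\<bar>(f y' - f x') * x\<bar> \<le> Lf * D * H"
    unfolding abs_mult using assms(3,4) by (intro mult_mono) auto
  moreover have "f y' * y - f x' * x = f y' * (y - x) + (f y' - f x') * x"
    by (simp add: algebra_simps)
  ultimately show ?thesis by (simp add: algebra_simps)
qed

lemma shift_multiple:
  assumes "\<And>k. g (k + P) = g k"
  shows "g (k + P * int N) = g k"
proof (induction N)
  case (Suc N)
  then show ?case using assms[of "k + P * int N"] by (simp add: algebra_simps)
qed simp

lemma is_solution_shift:
  fixes \<theta> :: "int \<Rightarrow> real" and P :: int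
  assumes x_sol: "is_solution m n r a C f \<theta> \<zeta> x"
    and \<theta>_shift: "\<And>k. \<theta> (k + 2 * P) = \<theta> k + \<Omega>" and \<zeta>_shift: "\<And>k. \<zeta> (k + P) = \<zeta> k"
  shows "is_solution m n r a C f \<theta> \<zeta> (\<lambda>t. x (t + \<Omega>))"
  unfolding is_solution_def
proof (intro allI ballI conjI)
  fix k c assume c: "c \<in> cells m n"
  define I where "I = {\<theta> (2*k - 1)..\<theta> (2*k)}"
  have ends: "\<theta> (2*(k + P) - 1) = \<theta> (2*k - 1) + \<Omega>" "\<theta> (2*(k + P)) = \<theta> (2*k) + \<Omega>"
    "\<theta> (2*(k + P) + 1) = \<theta> (2*k + 1) + \<Omega>"
    using \<theta>_shift[of "2*k - 1"] \<theta>_shift[of "2*k"] \<theta>_shift[of "2*k + 1"] by (simp_all add: algebra_simps)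
  have I_shift: "{\<theta> (2*k - 1) + \<Omega>..\<theta> (2*k) + \<Omega>} = (\<lambda>t. t + \<Omega>) ` I"
    unfolding I_def by simp
  have dlt_shift: "dlt \<theta> (k + P) = dlt \<theta> k"
    using ends unfolding dlt_def by simp
  note x_k = bspec[OF spec[OF x_sol[unfolded is_solution_def], of "k + P"] c,
      unfolded ends I_shift dlt_shift \<zeta>_shift]
  show "continuous_on {\<theta> (2*k - 1)..\<theta> (2*k)} (\<lambda>t. x (t + \<Omega>) c)"
    using continuous_on_compose2[OF conjunct1[OF x_k]
        continuous_on_add[OF continuous_on_id continuous_on_const] subset_refl]
    unfolding I_def .
  show "x (\<theta> (2*k + 1) + \<Omega>) c = (1 - dlt \<theta> k * a c) * x (\<theta> (2*k) + \<Omega>) c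
      - dlt \<theta> k * (\<Sum>hl\<in>nbhd m n r c. C c hl * f (x (\<theta> (2*k) + \<Omega>) hl) * x (\<theta> (2*k) + \<Omega>) c)
      + dlt \<theta> k * \<zeta> k c"
    using x_k by blast
  fix t assume t: "t \<in> {\<theta> (2*k - 1)..\<theta> (2*k)}"
  have shift_deriv: "((\<lambda>t. t + \<Omega>) has_real_derivative 1) (at t within I)"
    by (auto intro!: derivative_eq_intros)
  have "((\<lambda>t. x t c) has_real_derivative
      - a c * x (t + \<Omega>) c - (\<Sum>hl\<in>nbhd m n r c. C c hl * f (x (t + \<Omega>) hl) * x (t + \<Omega>) c) + \<zeta> k c)
      (at (t + \<Omega>) within (\<lambda>t. t + \<Omega>) ` I)"
    using x_k t unfolding I_def by blast
  from DERIV_image_chain[OF this shift_deriv]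
  show "((\<lambda>t. x (t + \<Omega>) c) has_real_derivative
      - a c * x (t + \<Omega>) c - (\<Sum>hl\<in>nbhd m n r c. C c hl * f (x (t + \<Omega>) hl) * x (t + \<Omega>) c) + \<zeta> k c)
      (at t within {\<theta> (2*k - 1)..\<theta> (2*k)})"
    unfolding I_def comp_def by simp
qed

lemma T0_shift:
  fixes \<theta> :: "int \<Rightarrow> real" and P :: int
  assumes "t \<in> T0 \<theta>" "\<And>k. \<theta> (k + 2 * P) = \<theta> k + \<Omega>"
  shows "t + \<Omega> \<in> T0 \<theta>"
proof -
  obtain k where "t \<in> {\<theta> (2*k - 1)..\<theta> (2*k)}" using assms(1) by (rule mem_T0E)
  moreover have "\<theta> (2*(k + P) - 1) = \<theta> (2*k - 1) + \<Omega>" "\<theta> (2*(k + P)) = \<theta> (2*k) + \<Omega>"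
    using assms(2)[of "2*k - 1"] assms(2)[of "2*k"] by (simp_all add: algebra_simps)
  ultimately show ?thesis by (intro mem_T0I[of _ _ "k + P"]) simp
qed

locale sicnn = periodic_time_scale \<theta> p \<omega> for \<theta> :: "int \<Rightarrow> real" and p \<omega> +
  fixes m n r :: nat and a :: "nat \<times> nat \<Rightarrow> real" and C :: "nat \<times> nat \<Rightarrow> nat \<times> nat \<Rightarrow> real"
    and f :: "real \<Rightarrow> real" and K :: "nat \<times> nat \<Rightarrow> real" and Mf Lf :: real
  assumes a_pos: "\<And>c. c \<in> cells m n \<Longrightarrow> 0 < a c"
    and C_nonneg: "\<And>c hl. c \<in> cells m n \<Longrightarrow> hl \<in> cells m n \<Longrightarrow> 0 \<le> C c hl"
    and lam_pos: "\<And>c. c \<in> cells m n \<Longrightarrow> 0 < lam \<theta> p (a c)"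
    and f_bounded: "\<And>s. \<bar>f s\<bar> \<le> Mf"
    and f_lipschitz: "\<And>s1 s2. \<bar>f s1 - f s2\<bar> \<le> Lf * \<bar>s1 - s2\<bar>" and Lf_nonneg: "0 \<le> Lf"
    and uu_bound: "\<And>c s \<tau>. c \<in> cells m n \<Longrightarrow> \<tau> \<le> s \<Longrightarrow>
      \<bar>uu \<theta> (a c) s \<tau>\<bar> \<le> K c * exp (- lam \<theta> p (a c) * (s - \<tau>))"
begin

lemma coupling_difference_bound:
  fixes x y :: vec
  assumes c: "c \<in> cells m n" and x: "\<bar>x c\<bar> \<le> H" and xy: "\<And>hl. hl \<in> cells m n \<Longrightarrow> \<bar>x hl - y hl\<bar> \<le> D"
  shows "\<bar>(\<Sum>hl\<in>nbhd m n r c. C c hl * f (y hl) * y c) - (\<Sum>hl\<in>nbhd m n r c. C c hl * f (x hl) * x c)\<bar>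
    \<le> (\<Sum>hl\<in>nbhd m n r c. C c hl) * ((Mf + H * Lf) * D)"
proof -
  have "\<bar>(\<Sum>hl\<in>nbhd m n r c. C c hl * f (y hl) * y c) - (\<Sum>hl\<in>nbhd m n r c. C c hl * f (x hl) * x c)\<bar>
      = \<bar>\<Sum>hl\<in>nbhd m n r c. C c hl * (f (y hl) * y c - f (x hl) * x c)\<bar>"
    by (simp add: sum_subtractf[symmetric] algebra_simps)
  also have "\<dots> \<le> (\<Sum>hl\<in>nbhd m n r c. \<bar>C c hl * (f (y hl) * y c - f (x hl) * x c)\<bar>)"
    by (rule sum_abs)
  also have "\<dots> \<le> (\<Sum>hl\<in>nbhd m n r c. C c hl * ((Mf + H * Lf) * D))"
  proof (rule sum_mono)
    fix hl assume "hl \<in> nbhd m n r c"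
    then have hl: "hl \<in> cells m n" using nbhd_subset_cells by blast
    have "\<bar>f (y hl) * y c - f (x hl) * x c\<bar> \<le> (Mf + H * Lf) * D"
      using xy[OF c] xy[OF hl] x
      by (intro abs_product_difference_le f_bounded f_lipschitz Lf_nonneg) (auto simp: abs_minus_commute)
    then show "\<bar>C c hl * (f (y hl) * y c - f (x hl) * x c)\<bar> \<le> C c hl * ((Mf + H * Lf) * D)"
      unfolding abs_mult using C_nonneg[OF c hl] by (intro mult_mono) auto
  qed
  finally show ?thesis by (simp add: sum_distrib_right)
qed

lemma solution_difference_impulsive:
  assumes x_sol: "is_solution m n r a C f \<theta> \<zeta> x" and y_sol: "is_solution m n r a C f \<theta> \<zeta> y"
    and c: "c \<in> cells m n"
    and x_bdd: "\<And>t c. t \<in> T0 \<theta> \<Longrightarrow> c \<in> cells m n \<Longrightarrow> \<bar>x t c\<bar> \<le> H"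
    and xy: "\<And>t c. t \<in> T0 \<theta> \<Longrightarrow> c \<in> cells m n \<Longrightarrow> \<bar>x t c - y t c\<bar> \<le> D"
  shows "impulsive_linear_eq \<theta> (sk \<theta>) (a c) (lam \<theta> p (a c)) (K c) (psi_om \<theta> p) (dmax \<theta> p)
    ((\<Sum>hl\<in>nbhd m n r c. C c hl) * ((Mf + H * Lf) * D)) D p (\<lambda>t. x t c - y t c)
    (\<lambda>t. (\<Sum>hl\<in>nbhd m n r c. C c hl * f (y t hl) * y t c) - (\<Sum>hl\<in>nbhd m n r c. C c hl * f (x t hl) * x t c))"
proof unfold_locales
  note x_c = x_sol[unfolded is_solution_def, rule_format, OF c]
  note y_c = y_sol[unfolded is_solution_def, rule_format, OF c]
  show "\<And>j. sk \<theta> (j + int p) = sk \<theta> j + psi_om \<theta> p" by (rule sk_periodic)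
  show "\<bar>exp (- a c * (\<sigma> - \<tau>)) * (\<Prod>\<nu>\<in>{l..k}. 1 - dlt \<theta> \<nu> * a c)\<bar> \<le> K c * exp (- lam \<theta> p (a c) * (\<sigma> - \<tau>))"
    if "sk \<theta> (l - 1) < \<tau>" "\<tau> \<le> sk \<theta> l" "sk \<theta> k < \<sigma>" "\<sigma> \<le> sk \<theta> (k + 1)" "\<tau> \<le> \<sigma>" for l k \<tau> \<sigma>
    using uu_bound[OF c that(5)] uu_eq[OF that(1-4)] by simp
  show "continuous_on {\<theta> (2*j - 1)..\<theta> (2*j)} (\<lambda>t. x t c - y t c)" for j
    using x_c y_c by (intro continuous_intros) auto
  show "((\<lambda>t. x t c - y t c) has_real_derivative - a c * (x t c - y t c)
      + ((\<Sum>hl\<in>nbhd m n r c. C c hl * f (y t hl) * y t c) - (\<Sum>hl\<in>nbhd m n r c. C c hl * f (x t hl) * x t c)))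
      (at t within {\<theta> (2*j - 1)..\<theta> (2*j)})"
    if "t \<in> {\<theta> (2*j - 1)..\<theta> (2*j)}" for j t
  proof -
    have "((\<lambda>t. x t c) has_real_derivative
        - a c * x t c - (\<Sum>hl\<in>nbhd m n r c. C c hl * f (x t hl) * x t c) + \<zeta> j c)
        (at t within {\<theta> (2*j - 1)..\<theta> (2*j)})"
      and "((\<lambda>t. y t c) has_real_derivative
        - a c * y t c - (\<Sum>hl\<in>nbhd m n r c. C c hl * f (y t hl) * y t c) + \<zeta> j c)
        (at t within {\<theta> (2*j - 1)..\<theta> (2*j)})"
      using x_c[of j] y_c[of j] that by blast+
    from DERIV_diff[OF this] show ?thesis
      by (rule DERIV_cong) (simp add: algebra_simps)
  qed
  show "x (\<theta> (2*j + 1)) c - y (\<theta> (2*j + 1)) c = (1 - dlt \<theta> j * a c) * (x (\<theta> (2*j)) c - y (\<theta> (2*j)) c)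
      + dlt \<theta> j * ((\<Sum>hl\<in>nbhd m n r c. C c hl * f (y (\<theta> (2*j)) hl) * y (\<theta> (2*j)) c)
        - (\<Sum>hl\<in>nbhd m n r c. C c hl * f (x (\<theta> (2*j)) hl) * x (\<theta> (2*j)) c))" for j
    using x_c[of j] y_c[of j] by (simp add: algebra_simps)
  show "\<bar>(\<Sum>hl\<in>nbhd m n r c. C c hl * f (y t hl) * y t c) - (\<Sum>hl\<in>nbhd m n r c. C c hl * f (x t hl) * x t c)\<bar>
      \<le> (\<Sum>hl\<in>nbhd m n r c. C c hl) * ((Mf + H * Lf) * D)"
    if "t \<in> {\<theta> (2*j - 1)..\<theta> (2*j)}" for j t
    using mem_T0I[OF that] by (intro coupling_difference_bound c x_bdd xy)
  show "\<bar>x t c - y t c\<bar> \<le> D" if "t \<in> {\<theta> (2*j - 1)..\<theta> (2*j)}" for j t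
    using mem_T0I[OF that] c by (rule xy)
qed (use sk_diff psi_om_pos p_pos dlt_le_dmax a_pos[OF c] lam_pos[OF c] in auto)

lemma solution_difference_contracts:
  assumes x_sol: "is_solution m n r a C f \<theta> \<zeta> x" and y_sol: "is_solution m n r a C f \<theta> \<zeta> y"
    and x_bdd: "\<And>t c. t \<in> T0 \<theta> \<Longrightarrow> c \<in> cells m n \<Longrightarrow> \<bar>x t c\<bar> \<le> H"
    and xy: "\<And>t c. t \<in> T0 \<theta> \<Longrightarrow> c \<in> cells m n \<Longrightarrow> \<bar>x t c - y t c\<bar> \<le> D"
    and t: "t \<in> T0 \<theta>" and c: "c \<in> cells m n"
  shows "\<bar>x t c - y t c\<bar> \<le> (Mf + H * Lf) * cbar m n r \<theta> p a C K * D"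
proof -
  define G where "G = (\<Sum>hl\<in>nbhd m n r c. C c hl) * ((Mf + H * Lf) * D)"
  interpret impulsive_linear_eq \<theta> "sk \<theta>" "a c" "lam \<theta> p (a c)" "K c" "psi_om \<theta> p" "dmax \<theta> p" G D p
      "\<lambda>t. x t c - y t c"
      "\<lambda>t. (\<Sum>hl\<in>nbhd m n r c. C c hl * f (y t hl) * y t c) - (\<Sum>hl\<in>nbhd m n r c. C c hl * f (x t hl) * x t c)"
    unfolding G_def using x_sol y_sol c x_bdd xy by (rule solution_difference_impulsive)
  have interior: "\<bar>x u c - y u c\<bar> \<le> G * coefK \<theta> p (a c) (K c)" if "\<theta> (2*k - 1) < u" "u \<le> \<theta> (2*k)" for k u
  proof -
    interpret impulsive_linear_eq_at \<theta> "sk \<theta>" "a c" "lam \<theta> p (a c)" "K c" "psi_om \<theta> p" "dmax \<theta> p" G D p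
      "\<lambda>t. x t c - y t c"
      "\<lambda>t. (\<Sum>hl\<in>nbhd m n r c. C c hl * f (y t hl) * y t c) - (\<Sum>hl\<in>nbhd m n r c. C c hl * f (x t hl) * x t c)"
      k u
      using that by unfold_locales
    show ?thesis using abs_d_le_forcing_bound unfolding coefK_def by simp
  qed
  obtain k where k: "t \<in> {\<theta> (2*k - 1)..\<theta> (2*k)}" using t by (rule mem_T0E)
  have "\<bar>x t c - y t c\<bar> \<le> G * coefK \<theta> p (a c) (K c)"
  proof (cases "t = \<theta> (2*k - 1)")
    case True
    have "continuous_on {\<theta> (2*k - 1)..\<theta> (2*k)} (\<lambda>t. \<bar>x t c - y t c\<bar>)"
      using d_cont[of k] by (rule continuous_on_rabs)
    then have "(\<lambda>t. \<bar>x t c - y t c\<bar>) (\<theta> (2*k - 1)) \<le> (\<lambda>_. G * coefK \<theta> p (a c) (K c)) (\<theta> (2*k - 1))"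
      by (rule le_at_left_endpoint[where b = "\<theta> (2*k)"]) (use interior in auto)
    then show ?thesis using True by simp
  next
    case False
    then show ?thesis using k by (intro interior) auto
  qed
  also have "\<dots> \<le> (Mf + H * Lf) * cbar m n r \<theta> p a C K * D"
  proof -
    have "0 \<le> (Mf + H * Lf) * D"
      using f_bounded[of 0] x_bdd[OF t c] xy[OF t c] Lf_nonneg by simp
    moreover have "coefK \<theta> p (a c) (K c) * (\<Sum>hl\<in>nbhd m n r c. C c hl) \<le> cbar m n r \<theta> p a C K"
      unfolding cbar_def using c by (intro Max_ge) (auto simp: finite_cells)
    ultimately show ?thesis
      unfolding G_def using mult_right_mono by (fastforce simp: algebra_simps)
  qed
  finally show ?thesis .
qed

lemma bounded_solution_unique:
  assumes x_sol: "is_solution m n r a C f \<theta> \<zeta> x" and y_sol: "is_solution m n r a C f \<theta> \<zeta> y"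
    and x_bdd: "\<forall>t\<in>T0 \<theta>. vnorm m n (x t) \<le> H" and y_bdd: "\<forall>t\<in>T0 \<theta>. vnorm m n (y t) \<le> H"
    and contraction: "(Mf + H * Lf) * cbar m n r \<theta> p a C K < 1"
  shows "\<forall>t\<in>T0 \<theta>. \<forall>c\<in>cells m n. y t c = x t c"
proof (intro ballI)
  fix t c assume t: "t \<in> T0 \<theta>" and c: "c \<in> cells m n"
  define \<kappa> where "\<kappa> = max ((Mf + H * Lf) * cbar m n r \<theta> p a C K) 0"
  have xH: "\<bar>x t c\<bar> \<le> H" if "t \<in> T0 \<theta>" "c \<in> cells m n" for t c
    using abs_le_vnorm[OF that(2), of "x t"] x_bdd that(1) by fastforce
  have yH: "\<bar>y t c\<bar> \<le> H" if "t \<in> T0 \<theta>" "c \<in> cells m n" for t c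
    using abs_le_vnorm[OF that(2), of "y t"] y_bdd that(1) by fastforce
  have "\<bar>x t c - y t c\<bar> \<le> \<kappa> ^ N * (2 * H)" if "t \<in> T0 \<theta>" "c \<in> cells m n" for N t c
    using that
  proof (induction N arbitrary: t c)
    case 0
    then show ?case using xH yH by fastforce
  next
    case (Suc N)
    have "\<bar>x t c - y t c\<bar> \<le> (Mf + H * Lf) * cbar m n r \<theta> p a C K * (\<kappa> ^ N * (2 * H))"
      using x_sol y_sol xH Suc by (rule solution_difference_contracts)
    moreover have "(Mf + H * Lf) * cbar m n r \<theta> p a C K * (\<kappa> ^ N * (2 * H)) \<le> \<kappa> * (\<kappa> ^ N * (2 * H))"
    proof (rule mult_right_mono)
      show "0 \<le> \<kappa> ^ N * (2 * H)" using Suc.IH[OF Suc.prems] by linarith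
    qed (simp add: \<kappa>_def)
    ultimately have "\<bar>x t c - y t c\<bar> \<le> \<kappa> * (\<kappa> ^ N * (2 * H))" by linarith
    then show ?case by (simp add: mult.assoc)
  qed
  then have "\<bar>x t c - y t c\<bar> \<le> 0 + 2 * H * \<kappa> ^ N" for N
    using t c by (simp add: mult.commute)
  then have "\<bar>x t c - y t c\<bar> \<le> 0"
    by (rule le_of_le_add_geometric) (use contraction in \<open>auto simp: \<kappa>_def\<close>)
  then show "y t c = x t c" by simp
qed

end

theorem mainTheorem5:
  fixes m n r p q0 :: nat and \<theta> :: "int \<Rightarrow> real" and \<omega> :: real
    and a :: "nat \<times> nat \<Rightarrow> real" and C :: "nat \<times> nat \<Rightarrow> nat \<times> nat \<Rightarrow> real"
    and f :: "real \<Rightarrow> real" and \<Lambda> :: "vec set" and F :: "vec \<Rightarrow> vec"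
    and K :: "nat \<times> nat \<Rightarrow> real" and Mf Lf :: real
    and \<zeta> :: "int \<Rightarrow> vec" and x :: "real \<Rightarrow> vec"
  assumes mn: "m \<ge> 1" "n \<ge> 1"
    and a_pos: "\<forall>c\<in>cells m n. a c > 0"
    and C_nonneg: "\<forall>c\<in>cells m n. \<forall>hl\<in>cells m n. C c hl \<ge> 0"
    and f_cont: "continuous_on UNIV f"
    and \<theta>_mono: "strict_mono \<theta>" and \<theta>_0: "\<theta> (-1) < 0" "0 < \<theta> 0"
    and \<omega>_pos: "\<omega> > 0" and p_pos: "p \<ge> 1"
    and \<theta>_per: "\<forall>k. \<theta> (k + 2 * int p) = \<theta> k + \<omega>"
    and \<Lambda>_compact: "compact \<Lambda>" and \<Lambda>_cells: "\<forall>v\<in>\<Lambda>. \<forall>c. c \<notin> cells m n \<longrightarrow> v c = 0"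
    and F_cont: "continuous_on \<Lambda> F" and F_maps: "F ` \<Lambda> \<subseteq> \<Lambda>"
    and C1: "\<forall>k. \<forall>c\<in>cells m n. dlt \<theta> k * a c \<noteq> 1"
    and C2: "\<forall>c\<in>cells m n. lam \<theta> p (a c) > 0"
    and C3: "Mf > 0" "\<forall>s. \<bar>f s\<bar> \<le> Mf"
    and C4: "Lf > 0" "\<forall>s1 s2. \<bar>f s1 - f s2\<bar> \<le> Lf * \<bar>s1 - s2\<bar>"
    and K: "\<forall>c\<in>cells m n. K c > 0 \<and>
              (\<forall>s \<tau>. \<tau> \<le> s \<longrightarrow> \<bar>uu \<theta> (a c) s \<tau>\<bar> \<le> K c * exp (- lam \<theta> p (a c) * (s - \<tau>)))"
    and C5: "(Mf + H0 m n r \<theta> p a C K Mf \<Lambda> F * Lf) * cbar m n r \<theta> p a C K < 1"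
    and \<zeta>_Theta: "in_Theta \<Lambda> F \<zeta>"
    and q0_pos: "q0 \<ge> 1" and \<zeta>_per: "\<forall>k. \<zeta> (k + int q0) = \<zeta> k"
    and x_sol: "is_solution m n r a C f \<theta> \<zeta> x"
    and x_bdd: "\<forall>t\<in>T0 \<theta>. vnorm m n (x t) \<le> H0 m n r \<theta> p a C K Mf \<Lambda> F"
  shows "\<forall>t\<in>T0 \<theta>. \<forall>c\<in>cells m n.
           x (t + real (lcm q0 p div p) * \<omega>) c = x t c"
proof -
  \<comment> \<open>Compactness of \<open>\<Lambda>\<close>, continuity of \<open>f\<close> and \<open>F\<close>, (C1) and the positivity of \<open>K\<close> and \<open>Mf\<close>
    serve the existence of the bounded solution only; uniqueness does not need them.\<close>
  interpret sicnn \<theta> p \<omega> m n r a C f K Mf Lf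
    by unfold_locales (use assms in auto)
  define P where "P = int (lcm q0 p)"
  define \<Omega> where "\<Omega> = real (lcm q0 p div p) * \<omega>"
  have P_eq: "P = int p * int (lcm q0 p div p)"
    unfolding P_def using dvd_lcm2[of p q0] by (metis dvd_mult_div_cancel of_nat_mult)
  have \<theta>_shift: "\<theta> (k + 2 * P) = \<theta> k + \<Omega>" for k
    using theta_shift[of k "int (lcm q0 p div p)"] unfolding P_eq \<Omega>_def by (simp add: mult.assoc)
  obtain N where "lcm q0 p = q0 * N" by (metis dvd_lcm1 dvdE)
  then have \<zeta>_shift: "\<zeta> (k + P) = \<zeta> k" for k
    using shift_multiple[of \<zeta> "int q0" k N] \<zeta>_per unfolding P_def by simp
  have "is_solution m n r a C f \<theta> \<zeta> (\<lambda>t. x (t + \<Omega>))"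
    using x_sol \<theta>_shift \<zeta>_shift by (rule is_solution_shift)
  moreover have "\<forall>t\<in>T0 \<theta>. vnorm m n (x (t + \<Omega>)) \<le> H0 m n r \<theta> p a C K Mf \<Lambda> F"
    using x_bdd T0_shift[where \<theta> = \<theta> and P = P and \<Omega> = \<Omega>] \<theta>_shift by blast
  ultimately show ?thesis
    using bounded_solution_unique[OF x_sol _ x_bdd _ C5] unfolding \<Omega>_def by blast
qed

end
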